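(* Let $(X,\tau_X)$ be a locally compact space and $(Y,\mathcal{V})$ a Hausdorff uniform space. Equip $\mathcal{C}(X,Y)$, the set of continuous point-compact multifunctions from $X$ to $Y$, with the topology of uniform convergence $\tau_{uc}$. A subfamily $\mathcal{F}\subset\mathcal{C}(X,Y)$ is relatively $\tau_{uc}$-compact if and only if (AA1) $\mathcal{F}$ is pointwise relatively compact and equicontinuous, and (AA2) $\mathcal{F}$ satisfies the finite extension property.
   Context: A multifunction $f:X\to Y$ assigns to each $x$ a nonempty $f(x)\subset Y$; it is point-compact if each $f(x)$ is compact. For $V\subset Y\times Y$, $V[a]=\{w:(a,w)\in V\}$, $V[A]=\bigcup_{a\in A}V[a]$, $f(A)=\bigcup_{a\in A}f(a)$; entourages are taken symmetric. $f$ is upper semi-continuous if for each $x$ and open $W\supset f(x)$ there is an open $U_x\ni x$ with $f(U_x)\subset W$; lower semi-continuous if for each $x$ and open $W$ with $f(x)\cap W\neq\emptyset$ there is an open $U_x\ni x$ with $f(u)\cap W\neq\emptyset$ for all $u\in U_x$; continuous if both. For $V\in\mathcal{V}$ let $$V^{\dagger}=\{(f,g):\ \forall x\in X\ \forall y\in f(x)\ \forall z\in g(x):\ (\{y\}\times g(x))\cap V\neq\emptyset,\ (f(x)\times\{z\})\cap V\neq\emptyset\};$$ the sets $V^\dagger$ form a base of the uniformity of uniform convergence, which induces $\tau_{uc}$. The uniformity of pointwise convergence $\mathcal{W}_{pc}$ on $\mathcal{F}$ has subbase the sets defined like $V^\dagger$ but with the quantifier over $x$ replaced by a single fixed $x\in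 X$ (for $x\in X$, $V\in\mathcal{V}$). $\mathcal{F}$ is pointwise relatively compact if $\bigcup\{f(x):f\in\mathcal{F}\}$ is relatively compact in $Y$ for every $x\in X$. $\mathcal{F}$ is equicontinuous if for every $x\in X$ and $V\in\mathcal{V}$ there is an open $U_x\ni x$ such that for all $f\in\mathcal{F}$: $f(U_x)\subset V[f(x)]$, and $f(u)\cap V[y]\neq\emptyset$ for all $u\in U_x$, $y\in f(x)$. $\mathcal{F}$ satisfies the finite extension property if for every $V\in\mathcal{V}$ there is $W\in\mathcal{W}_{pc}$ (on $\mathcal{F}$) with $W\subset V^\dagger\cap(\mathcal{F}\times\mathcal{F})$. Relatively $\tau_{uc}$-compact means the $\tau_{uc}$-closure of $\mathcal{F}$ in $\mathcal{C}(X,Y)$ is compact. *)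

theory Defs
  imports "HOL-Analysis.Analysis"
begin

text \<open>Multifunctions from X (a topological type) to Y (a uniform type) are
  functions of type 'a => 'b set.  Entourages are taken symmetric.\<close>

definition entourage :: "('b::uniform_space \<times> 'b) set \<Rightarrow> bool" where
  "entourage V \<longleftrightarrow> (\<forall>\<^sub>F p in uniformity. p \<in> V) \<and> (\<forall>a b. (a, b) \<in> V \<longrightarrow> (b, a) \<in> V)"

definition usc :: "('a::topological_space \<Rightarrow> 'b::topological_space set) \<Rightarrow> bool" where
  "usc f \<longleftrightarrow> (\<forall>x W. open W \<and> f x \<subseteq> W \<longrightarrow>
      (\<exists>U. open U \<and> x \<in> U \<and> (\<forall>u\<in>U. f u \<subseteq> W)))"

definition lsc :: "('a::topological_space \<Rightarrow> 'b::topological_space set) \<Rightarrow> bool" where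
  "lsc f \<longleftrightarrow> (\<forall>x W. open W \<and> f x \<inter> W \<noteq> {} \<longrightarrow>
      (\<exists>U. open U \<and> x \<in> U \<and> (\<forall>u\<in>U. f u \<inter> W \<noteq> {})))"

definition mcont :: "('a::topological_space \<Rightarrow> 'b::topological_space set) set" where
  "mcont = {f. (\<forall>x. f x \<noteq> {} \<and> compact (f x)) \<and> usc f \<and> lsc f}"

text \<open>The relation at a single point x (subbase of the pointwise uniformity).\<close>
definition pdagger :: "'a \<Rightarrow> ('b \<times> 'b) set \<Rightarrow> (('a \<Rightarrow> 'b set) \<times> ('a \<Rightarrow> 'b set)) set" where
  "pdagger x V = {(f, g). \<forall>y\<in>f x. \<forall>z\<in>g x.
      ({y} \<times> g x) \<inter> V \<noteq> {} \<and> (f x \<times> {z}) \<inter> V \<noteq> {}}"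

text \<open>V-dagger: base of the uniformity of uniform convergence.\<close>
definition udagger :: "('b \<times> 'b) set \<Rightarrow> (('a \<Rightarrow> 'b set) \<times> ('a \<Rightarrow> 'b set)) set" where
  "udagger V = {(f, g). \<forall>x. \<forall>y\<in>f x. \<forall>z\<in>g x.
      ({y} \<times> g x) \<inter> V \<noteq> {} \<and> (f x \<times> {z}) \<inter> V \<noteq> {}}"

lemma udagger_mono: "V \<subseteq> W \<Longrightarrow> udagger V \<subseteq> udagger W"
  unfolding udagger_def by blast

lemma entourage_Int: "entourage V \<Longrightarrow> entourage W \<Longrightarrow> entourage (V \<inter> W)"
  unfolding entourage_def by (auto intro: eventually_conj)

lemma entourage_UNIV: "entourage UNIV"
  unfolding entourage_def by auto

definition uc_open :: "('a::topological_space \<Rightarrow> 'b::uniform_space set) set \<Rightarrow> bool" where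
  "uc_open U \<longleftrightarrow> U \<subseteq> mcont \<and>
     (\<forall>f\<in>U. \<exists>V. entourage V \<and> {g\<in>mcont. (f, g) \<in> udagger V} \<subseteq> U)"

lemma istopology_uc_open: "istopology uc_open"
  unfolding istopology_def
proof safe
  fix S T :: "('a \<Rightarrow> 'b set) set"
  assume S: "uc_open S" and T: "uc_open T"
  show "uc_open (S \<inter> T)"
    unfolding uc_open_def
  proof safe
    show "x \<in> mcont" if "x \<in> S" for x using S that unfolding uc_open_def by blast
  next
    fix f assume f: "f \<in> S" "f \<in> T"
    obtain V1 where V1: "entourage V1" "{g\<in>mcont. (f, g) \<in> udagger V1} \<subseteq> S"
      using S f unfolding uc_open_def by blast
    obtain V2 where V2: "entourage V2" "{g\<in>mcont. (f, g) \<in> udagger V2} \<subseteq> T"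
      using T f unfolding uc_open_def by blast
    have "{g\<in>mcont. (f, g) \<in> udagger (V1 \<inter> V2)} \<subseteq> S \<inter> T"
      using V1(2) V2(2) udagger_mono[of "V1 \<inter> V2" V1] udagger_mono[of "V1 \<inter> V2" V2] by blast
    then show "\<exists>V. entourage V \<and> {g\<in>mcont. (f, g) \<in> udagger V} \<subseteq> S \<inter> T"
      using entourage_Int[OF V1(1) V2(1)] by blast
  qed
next
  fix K :: "('a \<Rightarrow> 'b set) set set"
  assume K: "\<forall>S\<in>K. uc_open S"
  show "uc_open (\<Union>K)"
    unfolding uc_open_def
  proof safe
    fix f S assume "f \<in> S" "S \<in> K"
    then show "f \<in> mcont" using K unfolding uc_open_def by blast
  next
    fix f S assume fS: "f \<in> S" "S \<in> K"
    then obtain V where "entourage V" "{g\<in>mcont. (f, g) \<in> udagger V} \<subseteq> S"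
      using K unfolding uc_open_def by blast
    then show "\<exists>V. entourage V \<and> {g\<in>mcont. (f, g) \<in> udagger V} \<subseteq> \<Union>K"
      using fS by blast
  qed
qed

definition tau_uc :: "('a::topological_space \<Rightarrow> 'b::uniform_space set) topology" where
  "tau_uc = topology uc_open"

definition pointwise_relcompact :: "('a \<Rightarrow> 'b::topological_space set) set \<Rightarrow> bool" where
  "pointwise_relcompact F \<longleftrightarrow> (\<forall>x. compact (closure (\<Union>f\<in>F. f x)))"

definition equicontinuous :: "('a::topological_space \<Rightarrow> 'b::uniform_space set) set \<Rightarrow> bool" where
  "equicontinuous F \<longleftrightarrow> (\<forall>x V. entourage V \<longrightarrow>
     (\<exists>U. open U \<and> x \<in> U \<and> (\<forall>f\<in>F.
        (\<forall>u\<in>U. f u \<subseteq> V `` f x) \<and> (\<forall>u\<in>U. \<forall>y\<in>f x. f u \<inter> V `` {y} \<noteq> {}))))"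

text \<open>Finite extension property: every V-dagger (restricted to F x F) contains
  a member of the pointwise uniformity on F, i.e. contains a finite
  intersection of subbasic sets pdagger x W (restricted to F x F).\<close>
definition finite_extension :: "('a::topological_space \<Rightarrow> 'b::uniform_space set) set \<Rightarrow> bool" where
  "finite_extension F \<longleftrightarrow> (\<forall>V. entourage V \<longrightarrow>
     (\<exists>P. finite P \<and> (\<forall>(x, W)\<in>P. entourage W) \<and>
        {(f, g). f \<in> F \<and> g \<in> F \<and> (\<forall>(x, W)\<in>P. (f, g) \<in> pdagger x W)} \<subseteq> udagger V))"

end

theory Submission
  imports Defs
begin

text \<open>
  Necessity: a compact set of continuous point-compact multifunctions is, for every entourage,
  covered by finitely many uniform balls. A single continuous point-compact multifunction is
  equicontinuous; equicontinuity and compactness of the pointwise unions survive uniform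
  approximation; and the finite extension property only has to separate, at one point each, the
  finitely many pairs of ball centres that are not uniformly close.

  Sufficiency: every ultrafilter U on the closure of F converges, namely to its lower limit
  x \<mapsto> {y. for every entourage W, g x meets W[y] for U-almost all g}. Pointwise relative
  compactness and a cluster point argument make this set compact, nonempty and Hausdorff-close
  to g x for U-almost all g. The finite extension property makes the closeness uniform in x,
  because uniform closeness of approximants from F is decided at finitely many points; the limit
  is continuous since uniform limits of equicontinuous families are equicontinuous, and for a
  single compact-valued multifunction equicontinuity is continuity.
\<close>

section \<open>Ultrafilters\<close>

definition ultrafilter :: "'a filter \<Rightarrow> bool" where
  "ultrafilter U \<longleftrightarrow> U \<noteq> bot \<and> (\<forall>P. eventually P U \<or> eventually (\<lambda>x. \<not> P x) U)"

lemma ultrafilter_eventually_neg: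
  "ultrafilter U \<Longrightarrow> \<not> eventually P U \<Longrightarrow> eventually (\<lambda>x. \<not> P x) U"
  unfolding ultrafilter_def by blast

lemma ultrafilter_eventually_ex: "ultrafilter U \<Longrightarrow> eventually P U \<Longrightarrow> \<exists>x. P x"
  unfolding ultrafilter_def using eventually_happens' by blast

lemma ultrafilter_exists:
  assumes "F \<noteq> bot"
  obtains U where "U \<le> F" "ultrafilter U"
proof -
  let ?R = "{(G, H). H \<noteq> bot \<and> H \<le> G \<and> G \<le> F}"
  have field: "Field ?R = {G. G \<noteq> bot \<and> G \<le> F}"
    by (auto simp: Field_def bot_unique)
  have "\<exists>M\<in>Field ?R. \<forall>G\<in>Field ?R. (M, G) \<in> ?R \<longrightarrow> G = M"
  proof (rule Zorns_po_lemma)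
    show "Partial_order ?R"
      by (auto simp: partial_order_on_def preorder_on_def
          antisym_def refl_on_def trans_def Field_def bot_unique)
    show "\<exists>L\<in>Field ?R. \<forall>G\<in>C. (G, L) \<in> ?R" if "C \<in> Chains ?R" for C
    proof (cases "C = {}")
      case True
      then show ?thesis using assms field by auto
    next
      case False
      have chain: "\<And>G H. G \<in> C \<Longrightarrow> H \<in> C \<Longrightarrow> G \<le> H \<or> H \<le> G"
        and proper: "\<And>G. G \<in> C \<Longrightarrow> G \<noteq> bot \<and> G \<le> F"
        using that unfolding Chains_def by auto
      have directed: "\<exists>H\<in>C. H \<le> inf G G'" if "G \<in> C" "G' \<in> C" for G G'
        using chain[OF that]
      proof
        assume "G \<le> G'"
        then show ?thesis using that(1) by (intro bexI[of _ G]) simp_all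
      next
        assume "G' \<le> G"
        then show ?thesis using that(2) by (intro bexI[of _ G']) simp_all
      qed
      have "eventually (\<lambda>_. False) (Inf C) \<longleftrightarrow> (\<exists>G\<in>C. eventually (\<lambda>_. False) G)"
        by (rule eventually_Inf_base[OF False directed])
      then have "Inf C \<noteq> bot"
        using proper by (auto simp: eventually_False)
      moreover obtain G where "G \<in> C"
        using False by blast
      then have "Inf C \<le> F"
        using Inf_lower proper order_trans by blast
      ultimately show ?thesis
        using proper by (intro bexI[of _ "Inf C"]) (auto simp: field intro: Inf_lower)
    qed
  qed
  then obtain M where M: "M \<noteq> bot" "M \<le> F"
    and maximal: "\<And>G. G \<noteq> bot \<Longrightarrow> G \<le> M \<Longrightarrow> G = M"
    unfolding field by auto
  have "ultrafilter M"
    unfolding ultrafilter_def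
  proof (intro conjI allI M(1) disjCI)
    fix P
    assume "\<not> eventually (\<lambda>x. \<not> P x) M"
    then have "inf M (principal {x. P x}) = M"
      by (intro maximal) (simp_all add: trivial_limit_def eventually_inf_principal)
    moreover have "eventually P (inf M (principal {x. P x}))"
      by (simp add: eventually_inf_principal)
    ultimately show "eventually P M"
      by simp
  qed
  with M(2) show thesis by (rule that)
qed

lemma compactin_if_ultrafilters_converge:
  assumes "S \<subseteq> topspace X"
    and converge: "\<And>U. ultrafilter U \<Longrightarrow> eventually (\<lambda>x. x \<in> S) U \<Longrightarrow>
      \<exists>l\<in>S. \<forall>N. openin X N \<longrightarrow> l \<in> N \<longrightarrow> eventually (\<lambda>x. x \<in> N) U"
  shows "compactin X S"
  unfolding compactin_def
proof (intro conjI allI impI assms(1))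
  fix \<U> assume \<U>: "(\<forall>N\<in>\<U>. openin X N) \<and> S \<subseteq> \<Union>\<U>"
  show "\<exists>\<F>. finite \<F> \<and> \<F> \<subseteq> \<U> \<and> S \<subseteq> \<Union>\<F>"
  proof (rule ccontr)
    assume no_subcover: "\<not> (\<exists>\<F>. finite \<F> \<and> \<F> \<subseteq> \<U> \<and> S \<subseteq> \<Union>\<F>)"
    define B where "B = {\<V>. finite \<V> \<and> \<V> \<subseteq> \<U>}"
    define G where "G = (INF \<V>\<in>B. principal (S - \<Union>\<V>))"
    have eventually_G: "eventually P G \<longleftrightarrow> (\<exists>\<V>\<in>B. \<forall>x\<in>S - \<Union>\<V>. P x)" for P
      unfolding G_def eventually_principal[symmetric]
    proof (rule eventually_INF_base)
      show "B \<noteq> {}" unfolding B_def by blast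
      fix \<V> \<V>' assume "\<V> \<in> B" "\<V>' \<in> B"
      then show "\<exists>\<W>\<in>B. principal (S - \<Union>\<W>) \<le> inf (principal (S - \<Union>\<V>)) (principal (S - \<Union>\<V>'))"
        by (intro bexI[of _ "\<V> \<union> \<V>'"]) (auto simp: B_def)
    qed
    have "G \<noteq> bot"
    proof
      assume "G = bot"
      then obtain \<V> where "\<V> \<in> B" "\<forall>x\<in>S - \<Union>\<V>. False"
        using eventually_G[of "\<lambda>_. False"] by auto
      then have "finite \<V>" "\<V> \<subseteq> \<U>" "S \<subseteq> \<Union>\<V>"
        unfolding B_def by auto
      then show False
        using no_subcover by blast
    qed
    then obtain U where U: "U \<le> G" "ultrafilter U"
      by (rule ultrafilter_exists)
    have "eventually (\<lambda>x. x \<in> S) G"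
      unfolding eventually_G B_def by (intro bexI[of _ "{}"]) auto
    then obtain l where l: "l \<in> S" "\<forall>N. openin X N \<longrightarrow> l \<in> N \<longrightarrow> eventually (\<lambda>x. x \<in> N) U"
      using converge[OF U(2) filter_leD[OF U(1)]] by blast
    then obtain N where N: "N \<in> \<U>" "l \<in> N"
      using \<U> by blast
    have "eventually (\<lambda>x. x \<notin> N) G"
      unfolding eventually_G B_def using N(1) by (intro bexI[of _ "{N}"]) auto
    moreover have "eventually (\<lambda>x. x \<in> N) U"
      using l(2) N \<U> by blast
    ultimately have "eventually (\<lambda>x. x \<in> N \<and> x \<notin> N) U"
      using eventually_conj[OF _ filter_leD[OF U(1)]] by blast
    then show False
      using ultrafilter_eventually_ex[OF U(2)] by blast
  qed
qed

section \<open>Entourages\<close>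

lemma entourage_eventually: "entourage V \<Longrightarrow> eventually (\<lambda>p. p \<in> V) uniformity"
  unfolding entourage_def by blast

lemma entourage_refl: "entourage (V :: ('b::uniform_space \<times> 'b) set) \<Longrightarrow> (y, y) \<in> V"
  using uniformity_refl[OF entourage_eventually] by auto

lemma entourage_sym: "entourage V \<Longrightarrow> (a, b) \<in> V \<Longrightarrow> (b, a) \<in> V"
  unfolding entourage_def by blast

lemma entourage_symmetrize:
  fixes E :: "('b::uniform_space \<times> 'b) \<Rightarrow> bool"
  assumes "eventually E uniformity"
  shows "entourage {p. E p \<and> E (snd p, fst p)}"
proof -
  have "eventually (\<lambda>p. E p \<and> E (snd p, fst p)) uniformity"
    using eventually_conj[OF assms uniformity_sym[OF assms]]
    by (rule eventually_mono) (auto simp: case_prod_beta)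
  then show ?thesis unfolding entourage_def by auto
qed

lemma entourage_Inter:
  fixes P :: "('b::uniform_space \<times> 'b) set set"
  shows "finite P \<Longrightarrow> (\<forall>W\<in>P. entourage W) \<Longrightarrow> entourage (\<Inter>P)"
  by (induction P rule: finite_induct) (auto intro: entourage_Int entourage_UNIV)

lemma entourage_half:
  fixes V :: "('b::uniform_space \<times> 'b) set"
  assumes "entourage V"
  obtains W where "entourage W" "W O W \<subseteq> V"
proof -
  obtain D where D: "eventually D uniformity" "\<And>x y z. D (x, y) \<Longrightarrow> D (y, z) \<Longrightarrow> (x, z) \<in> V"
    using uniformity_transE[OF entourage_eventually[OF assms]] by metis
  have "{p. D p \<and> D (snd p, fst p)} O {p. D p \<and> D (snd p, fst p)} \<subseteq> V"
    using D(2) by auto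
  with entourage_symmetrize[OF D(1)] show thesis by (rule that)
qed

lemma entourage_relcomp_subsetD:
  assumes "entourage (W :: ('b::uniform_space \<times> 'b) set)" "W O R \<subseteq> V"
  shows "R \<subseteq> V"
proof
  fix p assume "p \<in> R"
  moreover obtain a b where "p = (a, b)"
    by (cases p)
  moreover have "(a, a) \<in> W"
    using entourage_refl[OF assms(1)] .
  ultimately show "p \<in> V"
    using assms(2) by blast
qed

lemma entourage_fourth_root:
  fixes V :: "('b::uniform_space \<times> 'b) set"
  assumes "entourage V"
  obtains W where "entourage W" "W O W O W O W \<subseteq> V"
proof -
  obtain W1 where W1: "entourage W1" "W1 O W1 \<subseteq> V"
    using entourage_half[OF assms] .
  obtain W where W: "entourage W" "W O W \<subseteq> W1"
    using entourage_half[OF W1(1)] .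
  have "(W O W) O (W O W) \<subseteq> V"
    using relcomp_mono[OF W(2) W(2)] W1(2) by blast
  then have "W O W O W O W \<subseteq> V"
    by (simp add: O_assoc)
  with W(1) show thesis
    by (rule that)
qed

lemma entourage_cube_root:
  fixes V :: "('b::uniform_space \<times> 'b) set"
  assumes "entourage V"
  obtains W where "entourage W" "W O W O W \<subseteq> V"
proof -
  obtain W where W: "entourage W" "W O W O W O W \<subseteq> V"
    using entourage_fourth_root[OF assms] .
  then have "W O W O W \<subseteq> V"
    by (rule entourage_relcomp_subsetD)
  with W(1) show thesis
    by (rule that)
qed

lemma entourage_Image_interior:
  assumes "entourage (W :: ('b::uniform_space \<times> 'b) set)"
  shows "y \<in> interior (W `` {y})"
proof -
  have "eventually (\<lambda>(x, z). x = y \<longrightarrow> z \<in> W `` {y}) uniformity"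
    using entourage_eventually[OF assms] by (rule eventually_mono) auto
  then have "eventually (\<lambda>z. z \<in> W `` {y}) (nhds y)"
    unfolding eventually_nhds_uniformity .
  then show ?thesis
    unfolding eventually_nhds interior_def by blast
qed

lemma entourage_Image_subset_open:
  fixes S :: "'b::uniform_space set"
  assumes "open S" "y \<in> S"
  obtains W where "entourage W" "W `` {y} \<subseteq> S"
proof -
  have "eventually (\<lambda>z. z \<in> S) (nhds y)"
    using assms by (rule eventually_nhds_in_open)
  then have E: "eventually (\<lambda>(x, z). x = y \<longrightarrow> z \<in> S) uniformity"
    unfolding eventually_nhds_uniformity .
  have "{p. (\<lambda>(x, z). x = y \<longrightarrow> z \<in> S) p \<and> (\<lambda>(x, z). x = y \<longrightarrow> z \<in> S) (snd p, fst p)} `` {y} \<subseteq> S"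
    by auto
  with entourage_symmetrize[OF E] show thesis by (rule that)
qed

lemma closure_iff_entourage:
  fixes A :: "'b::uniform_space set"
  shows "y \<in> closure A \<longleftrightarrow> (\<forall>W. entourage W \<longrightarrow> W `` {y} \<inter> A \<noteq> {})"
proof
  assume y: "y \<in> closure A"
  show "\<forall>W. entourage W \<longrightarrow> W `` {y} \<inter> A \<noteq> {}"
  proof (intro allI impI)
    fix W :: "('b \<times> 'b) set" assume "entourage W"
    then have "y \<in> interior (W `` {y}) \<inter> closure A"
      using entourage_Image_interior y by blast
    then have "interior (W `` {y}) \<inter> A \<noteq> {}"
      using open_Int_closure_eq_empty[OF open_interior] by blast
    then show "W `` {y} \<inter> A \<noteq> {}"
      using interior_subset[of "W `` {y}"] by blast
  qed
next
  assume near: "\<forall>W. entourage W \<longrightarrow> W `` {y} \<inter> A \<noteq> {}"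
  show "y \<in> closure A"
    unfolding closure_iff_nhds_not_empty
  proof (intro allI impI)
    fix B S assume "S \<subseteq> B" "open S" "y \<in> S"
    obtain W where "entourage W" "W `` {y} \<subseteq> S"
      by (rule entourage_Image_subset_open[OF \<open>open S\<close> \<open>y \<in> S\<close>])
    then show "A \<inter> B \<noteq> {}"
      using near \<open>S \<subseteq> B\<close> by blast
  qed
qed

lemma UN_interior_Image_subset: "(\<Union>y\<in>T. interior (W `` {y})) \<subseteq> W `` T"
proof
  fix z assume "z \<in> (\<Union>y\<in>T. interior (W `` {y}))"
  then obtain y where "y \<in> T" "z \<in> interior (W `` {y})"
    by blast
  then show "z \<in> W `` T"
    using interior_subset[of "W `` {y}"] by blast
qed

lemma open_between_entourage_Image:
  assumes "entourage (W :: ('b::uniform_space \<times> 'b) set)"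
  obtains S where "open S" "K \<subseteq> S" "S \<subseteq> W `` K"
proof
  show "open (\<Union>y\<in>K. interior (W `` {y}))" by blast
  show "K \<subseteq> (\<Union>y\<in>K. interior (W `` {y}))"
    using entourage_Image_interior[OF assms] by blast
  show "(\<Union>y\<in>K. interior (W `` {y})) \<subseteq> W `` K"
    by (rule UN_interior_Image_subset)
qed

lemma compact_entourage_net:
  fixes K :: "'b::uniform_space set"
  assumes "compact K" "entourage W"
  obtains T where "finite T" "T \<subseteq> K" "K \<subseteq> W `` T"
proof -
  have "K \<subseteq> (\<Union>y\<in>K. interior (W `` {y}))"
    using entourage_Image_interior[OF assms(2)] by blast
  then obtain T where T: "T \<subseteq> K" "finite T" "K \<subseteq> (\<Union>y\<in>T. interior (W `` {y}))"
    by (rule compactE_image[OF assms(1) open_interior])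
  show thesis
    by (rule that[OF T(2,1) order_trans[OF T(3) UN_interior_Image_subset]])
qed

lemma compact_entourage_Image_subset_open:
  fixes K :: "'b::uniform_space set"
  assumes "compact K" "open S" "K \<subseteq> S"
  obtains W where "entourage W" "W `` K \<subseteq> S"
proof -
  have "\<forall>k\<in>K. \<exists>W. entourage W \<and> (W O W) `` {k} \<subseteq> S"
  proof
    fix k assume "k \<in> K"
    then obtain V where V: "entourage V" "V `` {k} \<subseteq> S"
      using entourage_Image_subset_open assms(2,3) by blast
    obtain W where "entourage W" "W O W \<subseteq> V"
      using entourage_half[OF V(1)] .
    then show "\<exists>W. entourage W \<and> (W O W) `` {k} \<subseteq> S"
      using V(2) by blast
  qed
  then obtain Wk where Wk: "\<And>k. k \<in> K \<Longrightarrow> entourage (Wk k) \<and> (Wk k O Wk k) `` {k} \<subseteq> S"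
    by metis
  have "K \<subseteq> (\<Union>k\<in>K. interior (Wk k `` {k}))"
    using entourage_Image_interior Wk by blast
  then obtain T where T: "T \<subseteq> K" "finite T" "K \<subseteq> (\<Union>k\<in>T. interior (Wk k `` {k}))"
    by (rule compactE_image[OF assms(1) open_interior])
  have "entourage (\<Inter>(Wk ` T))"
    using T Wk by (intro entourage_Inter) auto
  moreover have "\<Inter>(Wk ` T) `` K \<subseteq> S"
  proof
    fix z assume "z \<in> \<Inter>(Wk ` T) `` K"
    then obtain y where y: "y \<in> K" "(y, z) \<in> \<Inter>(Wk ` T)" by blast
    then obtain k where "k \<in> T" "y \<in> interior (Wk k `` {k})"
      using T(3) by blast
    then have k: "k \<in> T" "(k, y) \<in> Wk k"
      using interior_subset[of "Wk k `` {k}"] by blast+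
    then have "(k, z) \<in> Wk k O Wk k" using y(2) by blast
    then show "z \<in> S" using Wk k T(1) by blast
  qed
  ultimately show thesis by (rule that)
qed

section \<open>Hausdorff closeness and the topology of uniform convergence\<close>

definition hausdorff_close :: "('b \<times> 'b) set \<Rightarrow> 'b set \<Rightarrow> 'b set \<Rightarrow> bool" where
  "hausdorff_close V A B \<longleftrightarrow> (\<forall>y\<in>A. \<exists>z\<in>B. (y, z) \<in> V) \<and> (\<forall>z\<in>B. \<exists>y\<in>A. (y, z) \<in> V)"

lemma hausdorff_close_trans:
  "hausdorff_close V A B \<Longrightarrow> hausdorff_close W B C \<Longrightarrow> hausdorff_close (V O W) A C"
  unfolding hausdorff_close_def by (meson relcompI)

lemma hausdorff_close_trans3:
  "hausdorff_close V A B \<Longrightarrow> hausdorff_close W B C \<Longrightarrow> hausdorff_close X C D \<Longrightarrow>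
    hausdorff_close (V O W O X) A D"
  by (rule hausdorff_close_trans[OF _ hausdorff_close_trans])

lemma hausdorff_close_mono: "V \<subseteq> W \<Longrightarrow> hausdorff_close V A B \<Longrightarrow> hausdorff_close W A B"
  unfolding hausdorff_close_def by blast

lemma hausdorff_close_sym: "entourage V \<Longrightarrow> hausdorff_close V A B \<Longrightarrow> hausdorff_close V B A"
  unfolding hausdorff_close_def by (meson entourage_sym)

lemma hausdorff_close_refl:
  assumes "entourage (V :: ('b::uniform_space \<times> 'b) set)"
  shows "hausdorff_close V A A"
  unfolding hausdorff_close_def using entourage_refl[OF assms] by blast

lemma hausdorff_close_iff_Image:
  assumes "entourage V"
  shows "hausdorff_close V A B \<longleftrightarrow> A \<subseteq> V `` B \<and> B \<subseteq> V `` A"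
  using entourage_sym[OF assms] unfolding hausdorff_close_def by blast

lemma equicontinuous_iff_hausdorff_close:
  "equicontinuous F \<longleftrightarrow> (\<forall>x V. entourage V \<longrightarrow>
     (\<exists>U. open U \<and> x \<in> U \<and> (\<forall>f\<in>F. \<forall>u\<in>U. hausdorff_close V (f x) (f u))))"
proof -
  have close: "hausdorff_close V A B \<longleftrightarrow> B \<subseteq> V `` A \<and> (\<forall>y\<in>A. B \<inter> V `` {y} \<noteq> {})"
    for V A B
    unfolding hausdorff_close_def by blast
  show ?thesis
    by (simp only: equicontinuous_def close ball_conj_distrib)
qed

lemma equicontinuousE:
  assumes "equicontinuous F" "entourage V"
  obtains U where "open U" "x \<in> U" "\<forall>f\<in>F. \<forall>u\<in>U. hausdorff_close V (f x) (f u)"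
proof -
  have "\<exists>U. open U \<and> x \<in> U \<and> (\<forall>f\<in>F. \<forall>u\<in>U. hausdorff_close V (f x) (f u))"
    by (rule mp[OF spec[OF spec[OF assms(1)[unfolded equicontinuous_iff_hausdorff_close], of x], of V] assms(2)])
  then show thesis
    using that by blast
qed

lemma mcont_nonempty: "f \<in> mcont \<Longrightarrow> f x \<noteq> {}"
  unfolding mcont_def by auto

lemma mcont_compact: "f \<in> mcont \<Longrightarrow> compact (f x)"
  unfolding mcont_def by auto

lemma pdagger_iff_hausdorff_close:
  "f \<in> mcont \<Longrightarrow> g \<in> mcont \<Longrightarrow> (f, g) \<in> pdagger x V \<longleftrightarrow> hausdorff_close V (f x) (g x)"
  unfolding pdagger_def hausdorff_close_def using mcont_nonempty by blast

lemma udagger_iff_hausdorff_close: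
  "f \<in> mcont \<Longrightarrow> g \<in> mcont \<Longrightarrow> (f, g) \<in> udagger V \<longleftrightarrow> (\<forall>x. hausdorff_close V (f x) (g x))"
  unfolding udagger_def hausdorff_close_def using mcont_nonempty by blast

definition uc_ball :: "('a::topological_space \<Rightarrow> 'b::uniform_space set) \<Rightarrow> ('b \<times> 'b) set \<Rightarrow>
    ('a \<Rightarrow> 'b set) set" where
  "uc_ball f V = {g \<in> mcont. \<forall>x. hausdorff_close V (f x) (g x)}"

lemma uc_ball_trans: "g \<in> uc_ball f V \<Longrightarrow> h \<in> uc_ball g W \<Longrightarrow> h \<in> uc_ball f (V O W)"
  unfolding uc_ball_def using hausdorff_close_trans by blast

lemma uc_ball_mono: "V \<subseteq> W \<Longrightarrow> uc_ball f V \<subseteq> uc_ball f W"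
  unfolding uc_ball_def using hausdorff_close_mono by blast

lemma centre_in_uc_ball: "f \<in> mcont \<Longrightarrow> entourage V \<Longrightarrow> f \<in> uc_ball f V"
  unfolding uc_ball_def using hausdorff_close_refl by blast

lemma openin_tau_uc:
  "openin tau_uc S \<longleftrightarrow> S \<subseteq> mcont \<and> (\<forall>f\<in>S. \<exists>V. entourage V \<and> uc_ball f V \<subseteq> S)"
proof -
  have ball: "{g \<in> mcont. (f, g) \<in> udagger V} = uc_ball f V" if "f \<in> S" "S \<subseteq> mcont" for f V
    using that udagger_iff_hausdorff_close unfolding uc_ball_def by blast
  have "openin tau_uc = uc_open"
    unfolding tau_uc_def by (rule topology_inverse'[OF istopology_uc_open])
  then show ?thesis
  proof (cases "S \<subseteq> mcont")
    case True
    then show ?thesis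
      unfolding \<open>openin tau_uc = uc_open\<close> uc_open_def Ball_def using ball[OF _ True] by simp
  next
    case False
    then show ?thesis
      unfolding \<open>openin tau_uc = uc_open\<close> uc_open_def by simp
  qed
qed

lemma topspace_tau_uc: "topspace tau_uc = mcont"
proof -
  have "openin tau_uc mcont"
    unfolding openin_tau_uc uc_ball_def using entourage_UNIV by blast
  moreover have "S \<subseteq> mcont" if "openin tau_uc S" for S
    using that openin_tau_uc by blast
  ultimately show ?thesis
    unfolding topspace_def by blast
qed

lemma tau_uc_closure_subset_mcont: "tau_uc closure_of F \<subseteq> mcont"
  using closure_of_subset_topspace[of tau_uc F] by (simp only: topspace_tau_uc)

lemma uc_ball_contains_openin:
  assumes "f \<in> mcont" "entourage W"
  obtains S where "openin tau_uc S" "f \<in> S" "S \<subseteq> uc_ball f W"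
proof
  let ?S = "{g \<in> mcont. \<exists>W'. entourage W' \<and> uc_ball g W' \<subseteq> uc_ball f W}"
  show "openin tau_uc ?S"
    unfolding openin_tau_uc
  proof (intro conjI ballI)
    fix g assume "g \<in> ?S"
    then obtain W' where W': "entourage W'" "uc_ball g W' \<subseteq> uc_ball f W"
      by blast
    obtain W'' where W'': "entourage W''" "W'' O W'' \<subseteq> W'"
      using entourage_half[OF W'(1)] .
    have "uc_ball h W'' \<subseteq> uc_ball f W" if "h \<in> uc_ball g W''" for h
      using uc_ball_trans[OF that] uc_ball_mono[OF W''(2)] W'(2) by blast
    then have "uc_ball g W'' \<subseteq> ?S"
      using W''(1) unfolding uc_ball_def by blast
    then show "\<exists>V. entourage V \<and> uc_ball g V \<subseteq> ?S"
      using W''(1) by blast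
  qed blast
  show "f \<in> ?S" using assms by blast
  show "?S \<subseteq> uc_ball f W" using centre_in_uc_ball by blast
qed

lemma in_closure_of_tau_uc:
  "g \<in> tau_uc closure_of F \<longleftrightarrow> g \<in> mcont \<and> (\<forall>V. entourage V \<longrightarrow> (\<exists>f\<in>F. f \<in> uc_ball g V))"
proof
  assume g: "g \<in> tau_uc closure_of F"
  then have "g \<in> mcont"
    using tau_uc_closure_subset_mcont by blast
  moreover have "\<exists>f\<in>F. f \<in> uc_ball g V" if V: "entourage V" for V
  proof -
    obtain S where "openin tau_uc S" "g \<in> S" "S \<subseteq> uc_ball g V"
      using uc_ball_contains_openin[OF \<open>g \<in> mcont\<close> V] .
    then show ?thesis using g unfolding in_closure_of by blast
  qed
  ultimately show "g \<in> mcont \<and> (\<forall>V. entourage V \<longrightarrow> (\<exists>f\<in>F. f \<in> uc_ball g V))"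
    by blast
next
  assume "g \<in> mcont \<and> (\<forall>V. entourage V \<longrightarrow> (\<exists>f\<in>F. f \<in> uc_ball g V))"
  then show "g \<in> tau_uc closure_of F"
    unfolding in_closure_of topspace_tau_uc openin_tau_uc by blast
qed

lemma subset_tau_uc_closure: "F \<subseteq> mcont \<Longrightarrow> F \<subseteq> tau_uc closure_of F"
  using closure_of_subset[of F tau_uc] by (simp add: topspace_tau_uc)

lemma tau_uc_closure_values_subset:
  fixes F :: "('a::topological_space \<Rightarrow> 'b::uniform_space set) set"
  assumes "g \<in> tau_uc closure_of F"
  shows "g x \<subseteq> closure (\<Union>f\<in>F. f x)"
proof
  fix y assume y: "y \<in> g x"
  show "y \<in> closure (\<Union>f\<in>F. f x)"
    unfolding closure_iff_entourage
  proof (intro allI impI)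
    fix W :: "('b \<times> 'b) set" assume "entourage W"
    then obtain f where "f \<in> F" "hausdorff_close W (g x) (f x)"
      using assms unfolding in_closure_of_tau_uc uc_ball_def by blast
    then show "W `` {y} \<inter> (\<Union>f\<in>F. f x) \<noteq> {}"
      using y unfolding hausdorff_close_def by blast
  qed
qed

lemma compactin_tau_uc_net:
  assumes "compactin tau_uc S" "\<And>g. g \<in> S \<Longrightarrow> entourage (W g)"
  obtains T where "finite T" "T \<subseteq> S" "\<forall>g\<in>S. \<exists>t\<in>T. g \<in> uc_ball t (W t)"
proof -
  have "S \<subseteq> mcont"
    using compactin_subset_topspace[OF assms(1)] by (simp add: topspace_tau_uc)
  have "\<exists>N. openin tau_uc N \<and> g \<in> N \<and> N \<subseteq> uc_ball g (W g)" if g: "g \<in> S" for g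
  proof -
    obtain N where "openin tau_uc N" "g \<in> N" "N \<subseteq> uc_ball g (W g)"
      by (rule uc_ball_contains_openin[OF subsetD[OF \<open>S \<subseteq> mcont\<close> g] assms(2)[OF g]])
    then show ?thesis by blast
  qed
  then obtain N where N: "\<And>g. g \<in> S \<Longrightarrow> openin tau_uc (N g) \<and> g \<in> N g \<and> N g \<subseteq> uc_ball g (W g)"
    by metis
  then have "\<forall>B\<in>N ` S. openin tau_uc B" "S \<subseteq> \<Union>(N ` S)"
    by blast+
  then obtain \<F> where \<F>: "finite \<F>" "\<F> \<subseteq> N ` S" "S \<subseteq> \<Union>\<F>"
    using assms(1) unfolding compactin_def by meson
  then obtain T where T: "T \<subseteq> S" "finite T" "\<F> = N ` T"
    using finite_subset_image by metis
  have "\<forall>g\<in>S. \<exists>t\<in>T. g \<in> uc_ball t (W t)"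
    using \<F>(3)[unfolded T(3)] N T(1) by blast
  then show thesis
    by (rule that[OF T(2,1)])
qed

section \<open>Equicontinuity\<close>

lemma equicontinuous_subset:
  fixes F :: "('a::topological_space \<Rightarrow> 'b::uniform_space set) set"
  assumes "F \<subseteq> G" "equicontinuous G"
  shows "equicontinuous F"
  unfolding equicontinuous_iff_hausdorff_close
proof (intro allI impI)
  fix x and V :: "('b \<times> 'b) set" assume "entourage V"
  then obtain U where "open U" "x \<in> U" "\<forall>f\<in>G. \<forall>u\<in>U. hausdorff_close V (f x) (f u)"
    by (rule equicontinuousE[OF assms(2), where x = x])
  then show "\<exists>U. open U \<and> x \<in> U \<and> (\<forall>f\<in>F. \<forall>u\<in>U. hausdorff_close V (f x) (f u))"
    using assms(1) by blast
qed

lemma equicontinuous_empty: "equicontinuous {}"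
  unfolding equicontinuous_def by (auto intro!: exI[of _ UNIV])

lemma equicontinuous_Un:
  fixes F :: "('a::topological_space \<Rightarrow> 'b::uniform_space set) set"
  assumes "equicontinuous F" "equicontinuous G"
  shows "equicontinuous (F \<union> G)"
  unfolding equicontinuous_iff_hausdorff_close
proof (intro allI impI)
  fix x and V :: "('b \<times> 'b) set" assume "entourage V"
  obtain U1 where "open U1" "x \<in> U1" "\<forall>f\<in>F. \<forall>u\<in>U1. hausdorff_close V (f x) (f u)"
    by (rule equicontinuousE[OF assms(1) \<open>entourage V\<close>, where x = x])
  moreover obtain U2 where "open U2" "x \<in> U2" "\<forall>f\<in>G. \<forall>u\<in>U2. hausdorff_close V (f x) (f u)"
    by (rule equicontinuousE[OF assms(2) \<open>entourage V\<close>, where x = x])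
  ultimately show "\<exists>U. open U \<and> x \<in> U \<and> (\<forall>f\<in>F \<union> G. \<forall>u\<in>U. hausdorff_close V (f x) (f u))"
    by (intro exI[of _ "U1 \<inter> U2"]) auto
qed

lemma equicontinuous_finite:
  "finite T \<Longrightarrow> (\<And>t. t \<in> T \<Longrightarrow> equicontinuous {t}) \<Longrightarrow> equicontinuous T"
proof (induction T rule: finite_induct)
  case empty
  show ?case by (rule equicontinuous_empty)
next
  case (insert t T)
  then show ?case using equicontinuous_Un[of "{t}" T] by simp
qed

lemma equicontinuous_singleton_iff:
  "equicontinuous {f} \<longleftrightarrow> (\<forall>x V. entourage V \<longrightarrow> (\<exists>U. open U \<and> x \<in> U \<and>
      (\<forall>u\<in>U. f u \<subseteq> V `` f x \<and> (\<forall>y\<in>f x. f u \<inter> V `` {y} \<noteq> {}))))"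
  by (simp add: equicontinuous_def ball_conj_distrib)

lemma mcont_if_equicontinuous_singleton:
  fixes f :: "'a::topological_space \<Rightarrow> 'b::uniform_space set"
  assumes "\<And>x. f x \<noteq> {}" "\<And>x. compact (f x)" and equi: "equicontinuous {f}"
  shows "f \<in> mcont"
proof -
  have "usc f"
    unfolding usc_def
  proof (intro allI impI)
    fix x S assume S: "open S \<and> f x \<subseteq> S"
    then obtain W where W: "entourage W" "W `` f x \<subseteq> S"
      using compact_entourage_Image_subset_open[OF assms(2)] S by blast
    obtain U where "open U" "x \<in> U" "\<forall>g\<in>{f}. \<forall>u\<in>U. hausdorff_close W (g x) (g u)"
      by (rule equicontinuousE[OF equi W(1), where x = x])
    moreover have "f u \<subseteq> S" if "hausdorff_close W (f x) (f u)" for u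
      using that W(2) unfolding hausdorff_close_def by blast
    ultimately show "\<exists>U. open U \<and> x \<in> U \<and> (\<forall>u\<in>U. f u \<subseteq> S)"
      by blast
  qed
  moreover have "lsc f"
    unfolding lsc_def
  proof (intro allI impI)
    fix x S assume S: "open S \<and> f x \<inter> S \<noteq> {}"
    then obtain y where y: "y \<in> f x" "y \<in> S" by blast
    then obtain W where W: "entourage W" "W `` {y} \<subseteq> S"
      using entourage_Image_subset_open[of S y] S y(2) by blast
    obtain U where "open U" "x \<in> U" "\<forall>g\<in>{f}. \<forall>u\<in>U. hausdorff_close W (g x) (g u)"
      by (rule equicontinuousE[OF equi W(1), where x = x])
    moreover have "f u \<inter> S \<noteq> {}" if "hausdorff_close W (f x) (f u)" for u
      using that y(1) W(2) unfolding hausdorff_close_def disjoint_iff by blast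
    ultimately show "\<exists>U. open U \<and> x \<in> U \<and> (\<forall>u\<in>U. f u \<inter> S \<noteq> {})"
      by blast
  qed
  ultimately show "f \<in> mcont"
    using assms(1,2) unfolding mcont_def by blast
qed

lemma usc_entourage:
  assumes "usc f" "entourage W"
  obtains U where "open U" "x \<in> U" "\<forall>u\<in>U. f u \<subseteq> W `` f x"
proof -
  obtain S where S: "open S" "f x \<subseteq> S" "S \<subseteq> W `` f x"
    using open_between_entourage_Image[OF assms(2)] .
  obtain U where "open U \<and> x \<in> U \<and> (\<forall>u\<in>U. f u \<subseteq> S)"
    using mp[OF spec[OF spec[OF assms(1)[unfolded usc_def], of x], of S] conjI[OF S(1,2)]] ..
  then have U: "open U" "x \<in> U" "\<forall>u\<in>U. f u \<subseteq> S"
    by simp_all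
  have "\<forall>u\<in>U. f u \<subseteq> W `` f x"
    using U(3) S(3) by blast
  then show thesis
    by (rule that[OF U(1,2)])
qed

lemma lsc_entourage_compact:
  assumes "lsc f" "compact (f x)" "entourage V"
  obtains U where "open U" "x \<in> U" "\<forall>u\<in>U. \<forall>y\<in>f x. f u \<inter> V `` {y} \<noteq> {}"
proof -
  obtain W where W: "entourage W" "W O W \<subseteq> V"
    using entourage_half[OF assms(3)] .
  obtain P where P: "finite P" "P \<subseteq> f x" "f x \<subseteq> W `` P"
    using compact_entourage_net[OF assms(2) W(1)] .
  have "\<forall>p\<in>P. \<exists>U. open U \<and> x \<in> U \<and> (\<forall>u\<in>U. f u \<inter> interior (W `` {p}) \<noteq> {})"
  proof
    fix p assume "p \<in> P"
    then have "open (interior (W `` {p})) \<and> f x \<inter> interior (W `` {p}) \<noteq> {}"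
      using P(2) entourage_Image_interior[OF W(1), of p] open_interior unfolding disjoint_iff by blast
    then show "\<exists>U. open U \<and> x \<in> U \<and> (\<forall>u\<in>U. f u \<inter> interior (W `` {p}) \<noteq> {})"
      by (rule mp[OF spec[OF spec[OF assms(1)[unfolded lsc_def], of x], of "interior (W `` {p})"]])
  qed
  then obtain Up where Up: "\<And>p. p \<in> P \<Longrightarrow>
      open (Up p) \<and> x \<in> Up p \<and> (\<forall>u\<in>Up p. f u \<inter> interior (W `` {p}) \<noteq> {})"
    by metis
  let ?U = "\<Inter>p\<in>P. Up p"
  have "open ?U"
    using Up P(1) by (auto intro!: open_INT)
  moreover have "x \<in> ?U"
    using Up by blast
  moreover have "f u \<inter> V `` {y} \<noteq> {}" if u: "u \<in> ?U" and y: "y \<in> f x" for u y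
  proof -
    obtain p where p: "p \<in> P" "(p, y) \<in> W"
      using P(3) y by blast
    then obtain c where "c \<in> f u" "c \<in> interior (W `` {p})"
      using Up[OF p(1)] u unfolding disjoint_iff by blast
    then have c: "c \<in> f u" "(p, c) \<in> W"
      using interior_subset[of "W `` {p}"] by blast+
    have "(y, c) \<in> W O W"
      using entourage_sym[OF W(1) p(2)] c(2) by blast
    then show ?thesis
      using c(1) W(2) unfolding disjoint_iff by blast
  qed
  ultimately show thesis
    by (intro that[of ?U]) blast+
qed

lemma equicontinuous_singleton_if_mcont:
  fixes f :: "'a::topological_space \<Rightarrow> 'b::uniform_space set"
  assumes "f \<in> mcont"
  shows "equicontinuous {f}"
  unfolding equicontinuous_singleton_iff
proof (intro allI impI)
  fix x and V :: "('b \<times> 'b) set" assume V: "entourage V"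
  have "usc f" "lsc f"
    using assms unfolding mcont_def by blast+
  obtain U1 where U1: "open U1" "x \<in> U1" "\<forall>u\<in>U1. f u \<subseteq> V `` f x"
    by (rule usc_entourage[OF \<open>usc f\<close> V, where x = x])
  obtain U2 where U2: "open U2" "x \<in> U2" "\<forall>u\<in>U2. \<forall>y\<in>f x. f u \<inter> V `` {y} \<noteq> {}"
    by (rule lsc_entourage_compact[OF \<open>lsc f\<close> mcont_compact[OF assms, of x] V])
  show "\<exists>U. open U \<and> x \<in> U \<and> (\<forall>u\<in>U. f u \<subseteq> V `` f x \<and> (\<forall>y\<in>f x. f u \<inter> V `` {y} \<noteq> {}))"
    using U1 U2 by (intro exI[of _ "U1 \<inter> U2"]) auto
qed

lemma equicontinuous_if_uniform_approx:
  fixes F :: "('a::topological_space \<Rightarrow> 'b::uniform_space set) set"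
  assumes "\<And>V. entourage V \<Longrightarrow>
    \<exists>T. equicontinuous T \<and> (\<forall>f\<in>F. \<exists>t\<in>T. \<forall>x. hausdorff_close V (t x) (f x))"
  shows "equicontinuous F"
  unfolding equicontinuous_iff_hausdorff_close
proof (intro allI impI)
  fix x and V :: "('b \<times> 'b) set" assume "entourage V"
  then obtain W where W: "entourage W" "W O W O W \<subseteq> V"
    by (rule entourage_cube_root)
  obtain T where T: "equicontinuous T" "\<forall>f\<in>F. \<exists>t\<in>T. \<forall>x. hausdorff_close W (t x) (f x)"
    using assms[OF W(1)] by blast
  obtain U where U: "open U" "x \<in> U" "\<forall>t\<in>T. \<forall>u\<in>U. hausdorff_close W (t x) (t u)"
    by (rule equicontinuousE[OF T(1) W(1), where x = x])
  have "hausdorff_close V (f x) (f u)" if f: "f \<in> F" and u: "u \<in> U" for f u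
  proof -
    obtain t where t: "t \<in> T" "\<forall>x. hausdorff_close W (t x) (f x)"
      using T(2) f by blast
    have "hausdorff_close W (f x) (t x)"
      using hausdorff_close_sym[OF W(1) t(2)[rule_format]] .
    moreover have "hausdorff_close W (t x) (t u)"
      using U(3) t(1) u by blast
    moreover have "hausdorff_close W (t u) (f u)"
      using t(2) by blast
    ultimately have "hausdorff_close (W O W O W) (f x) (f u)"
      by (rule hausdorff_close_trans3)
    then show ?thesis
      by (rule hausdorff_close_mono[OF W(2)])
  qed
  then show "\<exists>U. open U \<and> x \<in> U \<and> (\<forall>f\<in>F. \<forall>u\<in>U. hausdorff_close V (f x) (f u))"
    using U(1,2) by blast
qed

lemma mcont_if_uniform_approx:
  fixes h :: "'a::topological_space \<Rightarrow> 'b::uniform_space set"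
  assumes "\<And>x. h x \<noteq> {}" "\<And>x. compact (h x)"
    and "\<And>V. entourage V \<Longrightarrow> \<exists>g\<in>mcont. \<forall>x. hausdorff_close V (g x) (h x)"
  shows "h \<in> mcont"
proof -
  have "equicontinuous {h}"
    by (rule equicontinuous_if_uniform_approx) (use assms(3) equicontinuous_singleton_if_mcont in blast)
  then show ?thesis
    by (rule mcont_if_equicontinuous_singleton[of h, OF assms(1,2)])
qed

section \<open>Necessity\<close>

lemma compact_Union_values:
  fixes S :: "('a::topological_space \<Rightarrow> 'b::uniform_space set) set"
  assumes "compactin tau_uc S"
  shows "compact (\<Union>g\<in>S. g x)"
proof (rule compactI)
  fix \<C> assume \<C>: "\<forall>B\<in>\<C>. open B" "(\<Union>g\<in>S. g x) \<subseteq> \<Union>\<C>"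
  have S: "S \<subseteq> mcont"
    using compactin_subset_topspace[OF assms] by (simp add: topspace_tau_uc)
  have "\<forall>g\<in>S. \<exists>D W. finite D \<and> D \<subseteq> \<C> \<and> entourage W \<and> W `` g x \<subseteq> \<Union>D"
  proof
    fix g assume "g \<in> S"
    then have "compact (g x)" "g x \<subseteq> \<Union>\<C>"
      using S \<C>(2) mcont_compact[of g x] by blast+
    then obtain D where D: "D \<subseteq> \<C>" "finite D" "g x \<subseteq> \<Union>D"
      using \<C>(1) by (meson compactE)
    moreover have "open (\<Union>D)"
      using D(1) \<C>(1) by (intro open_Union) blast
    moreover obtain W where "entourage W" "W `` g x \<subseteq> \<Union>D"
      by (rule compact_entourage_Image_subset_open[OF \<open>compact (g x)\<close> \<open>open (\<Union>D)\<close> D(3)])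
    ultimately show "\<exists>D W. finite D \<and> D \<subseteq> \<C> \<and> entourage W \<and> W `` g x \<subseteq> \<Union>D"
      by blast
  qed
  then have "\<exists>D. \<forall>g\<in>S. \<exists>W. finite (D g) \<and> D g \<subseteq> \<C> \<and> entourage W \<and> W `` g x \<subseteq> \<Union>(D g)"
    by (rule bchoice)
  then obtain D where "\<forall>g\<in>S. \<exists>W. finite (D g) \<and> D g \<subseteq> \<C> \<and> entourage W \<and> W `` g x \<subseteq> \<Union>(D g)"
    ..
  then have "\<exists>W. \<forall>g\<in>S. finite (D g) \<and> D g \<subseteq> \<C> \<and> entourage (W g) \<and> W g `` g x \<subseteq> \<Union>(D g)"
    by (rule bchoice)
  then obtain W where DW: "\<forall>g\<in>S. finite (D g) \<and> D g \<subseteq> \<C> \<and> entourage (W g) \<and> W g `` g x \<subseteq> \<Union>(D g)"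
    ..
  obtain T where T: "finite T" "T \<subseteq> S" "\<forall>g\<in>S. \<exists>t\<in>T. g \<in> uc_ball t (W t)"
    by (rule compactin_tau_uc_net[OF assms, where W = W]) (use DW in blast)
  have "(\<Union>g\<in>S. g x) \<subseteq> \<Union>(\<Union>t\<in>T. D t)"
  proof
    fix z assume "z \<in> (\<Union>g\<in>S. g x)"
    then obtain g t where "z \<in> g x" "t \<in> T" "g \<in> uc_ball t (W t)"
      using T(3) by blast
    then have "z \<in> W t `` t x"
      unfolding uc_ball_def hausdorff_close_def by blast
    moreover have "W t `` t x \<subseteq> \<Union>(D t)"
      using bspec[OF DW subsetD[OF T(2) \<open>t \<in> T\<close>]] by simp
    ultimately have "z \<in> \<Union>(D t)"
      by (rule subsetD[rotated])
    then show "z \<in> \<Union>(\<Union>t\<in>T. D t)"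
      using \<open>t \<in> T\<close> by auto
  qed
  moreover have "finite (\<Union>t\<in>T. D t)" "(\<Union>t\<in>T. D t) \<subseteq> \<C>"
    using DW T(1,2) by auto
  ultimately show "\<exists>\<C>'\<subseteq>\<C>. finite \<C>' \<and> (\<Union>g\<in>S. g x) \<subseteq> \<Union>\<C>'"
    by (intro exI[of _ "\<Union>t\<in>T. D t"]) blast
qed

lemma pointwise_relcompact_if_compactin:
  fixes S :: "('a::topological_space \<Rightarrow> 'b::{uniform_space, t2_space} set) set"
  assumes "compactin tau_uc S"
  shows "pointwise_relcompact S"
  unfolding pointwise_relcompact_def
  using compact_Union_values[OF assms] by (simp add: closure_closed compact_imp_closed)

lemma pointwise_relcompact_subset:
  assumes "F \<subseteq> G" "pointwise_relcompact G"
  shows "pointwise_relcompact F"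
  unfolding pointwise_relcompact_def
proof
  fix x
  have "closure (\<Union>f\<in>F. f x) \<subseteq> closure (\<Union>g\<in>G. g x)"
    using assms(1) by (intro closure_mono) blast
  moreover have "compact (closure (\<Union>g\<in>G. g x) \<inter> closure (\<Union>f\<in>F. f x))"
    using compact_Int_closed[OF assms(2)[unfolded pointwise_relcompact_def, rule_format] closed_closure] .
  ultimately show "compact (closure (\<Union>f\<in>F. f x))"
    by (simp add: Int_absorb1)
qed

lemma equicontinuous_if_compactin:
  fixes S :: "('a::topological_space \<Rightarrow> 'b::uniform_space set) set"
  assumes "compactin tau_uc S"
  shows "equicontinuous S"
proof (rule equicontinuous_if_uniform_approx)
  fix V :: "('b \<times> 'b) set" assume "entourage V"
  then obtain T where T: "finite T" "T \<subseteq> S" "\<forall>g\<in>S. \<exists>t\<in>T. g \<in> uc_ball t V"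
    by (rule compactin_tau_uc_net[OF assms, where W = "\<lambda>_. V"]) (use \<open>entourage V\<close> in simp)
  have "T \<subseteq> mcont"
    using T(2) compactin_subset_topspace[OF assms] by (simp add: topspace_tau_uc)
  have "equicontinuous T"
    by (rule equicontinuous_finite[OF T(1)]) (use \<open>T \<subseteq> mcont\<close> equicontinuous_singleton_if_mcont in blast)
  then show "\<exists>T. equicontinuous T \<and> (\<forall>f\<in>S. \<exists>t\<in>T. \<forall>x. hausdorff_close V (t x) (f x))"
    using T(3) unfolding uc_ball_def by blast
qed

lemma finite_extensionE:
  assumes "finite_extension F" "entourage V"
  obtains P where "finite P" "\<forall>(x, W)\<in>P. entourage W"
    "{(f, g). f \<in> F \<and> g \<in> F \<and> (\<forall>(x, W)\<in>P. (f, g) \<in> pdagger x W)} \<subseteq> udagger V"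
proof -
  obtain P where "finite P \<and> (\<forall>(x, W)\<in>P. entourage W) \<and>
      {(f, g). f \<in> F \<and> g \<in> F \<and> (\<forall>(x, W)\<in>P. (f, g) \<in> pdagger x W)} \<subseteq> udagger V"
    using mp[OF spec[OF assms(1)[unfolded finite_extension_def]] assms(2)] ..
  then show thesis
    by (intro that[of P]) simp_all
qed

lemma finite_extension_hausdorff_close:
  assumes "F \<subseteq> mcont"
    and extends: "{(f, g). f \<in> F \<and> g \<in> F \<and> (\<forall>(x, W)\<in>P. (f, g) \<in> pdagger x W)} \<subseteq> udagger V"
    and "f \<in> F" "g \<in> F" "\<And>x W. (x, W) \<in> P \<Longrightarrow> hausdorff_close W (f x) (g x)"
  shows "hausdorff_close V (f y) (g y)"
proof -
  have "f \<in> mcont" "g \<in> mcont"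
    using assms(1,3,4) by blast+
  have "\<forall>q\<in>P. case q of (x, W) \<Rightarrow> (f, g) \<in> pdagger x W"
  proof
    fix q assume "q \<in> P"
    moreover obtain x W where "q = (x, W)"
      by (cases q)
    ultimately show "case q of (x, W) \<Rightarrow> (f, g) \<in> pdagger x W"
      using assms(5) pdagger_iff_hausdorff_close[OF \<open>f \<in> mcont\<close> \<open>g \<in> mcont\<close>] by simp
  qed
  then have "(f, g) \<in> udagger V"
    using assms(3,4) by (intro subsetD[OF extends]) simp
  then show ?thesis
    using udagger_iff_hausdorff_close[OF \<open>f \<in> mcont\<close> \<open>g \<in> mcont\<close>] by blast
qed

lemma finite_extension_subset:
  fixes F :: "('a::topological_space \<Rightarrow> 'b::uniform_space set) set"
  assumes "F \<subseteq> G" "finite_extension G"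
  shows "finite_extension F"
  unfolding finite_extension_def
proof (intro allI impI)
  fix V :: "('b \<times> 'b) set" assume "entourage V"
  then obtain P where "finite P" "\<forall>(x, W)\<in>P. entourage W"
    "{(f, g). f \<in> G \<and> g \<in> G \<and> (\<forall>(x, W)\<in>P. (f, g) \<in> pdagger x W)} \<subseteq> udagger V"
    by (rule finite_extensionE[OF assms(2)])
  then show "\<exists>P. finite P \<and> (\<forall>(x, W)\<in>P. entourage W) \<and>
      {(f, g). f \<in> F \<and> g \<in> F \<and> (\<forall>(x, W)\<in>P. (f, g) \<in> pdagger x W)} \<subseteq> udagger V"
    using assms(1) by (intro exI[of _ P]) auto
qed

lemma finite_separating_points:
  assumes "finite T"
  obtains X where "finite X"
    "\<forall>s\<in>T. \<forall>t\<in>T. (\<forall>x\<in>X. hausdorff_close W (s x) (t x)) \<longrightarrow> (\<forall>x. hausdorff_close W (s x) (t x))"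
proof -
  define far where "far = {(s, t) \<in> T \<times> T. \<not> (\<forall>x. hausdorff_close W (s x) (t x))}"
  have "\<forall>p\<in>far. \<exists>x. \<not> hausdorff_close W (fst p x) (snd p x)"
    unfolding far_def by auto
  then have "\<exists>witness. \<forall>p\<in>far. \<not> hausdorff_close W (fst p (witness p)) (snd p (witness p))"
    by (rule bchoice)
  then obtain witness where witness: "\<forall>p\<in>far. \<not> hausdorff_close W (fst p (witness p)) (snd p (witness p))"
    ..
  have "far \<subseteq> T \<times> T"
    unfolding far_def by auto
  then have "finite far"
    using finite_cartesian_product[OF assms assms] by (rule finite_subset)
  then have "finite (witness ` far)"
    by (rule finite_imageI)
  moreover have "\<forall>s\<in>T. \<forall>t\<in>T. (\<forall>x\<in>witness ` far. hausdorff_close W (s x) (t x)) \<longrightarrow>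
      (\<forall>x. hausdorff_close W (s x) (t x))"
  proof (intro ballI impI)
    fix s t assume "s \<in> T" "t \<in> T" and close: "\<forall>x\<in>witness ` far. hausdorff_close W (s x) (t x)"
    show "\<forall>x. hausdorff_close W (s x) (t x)"
    proof (rule ccontr)
      assume "\<not> (\<forall>x. hausdorff_close W (s x) (t x))"
      then have "(s, t) \<in> far"
        unfolding far_def using \<open>s \<in> T\<close> \<open>t \<in> T\<close> by auto
      then show False
        using witness close by fastforce
    qed
  qed
  ultimately show thesis
    by (rule that)
qed

lemma finite_extension_if_compactin:
  fixes S :: "('a::topological_space \<Rightarrow> 'b::uniform_space set) set"
  assumes "compactin tau_uc S"
  shows "finite_extension S"
  unfolding finite_extension_def
proof (intro allI impI)
  fix V :: "('b \<times> 'b) set" assume "entourage V"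
  obtain W where W: "entourage W" "W O W O W \<subseteq> V"
    using entourage_cube_root[OF \<open>entourage V\<close>] .
  obtain Z where Z: "entourage Z" "Z O Z O Z \<subseteq> W"
    using entourage_cube_root[OF W(1)] .
  have "Z \<subseteq> W"
    by (rule entourage_relcomp_subsetD[OF Z(1) entourage_relcomp_subsetD[OF Z(1) Z(2)]])
  have S: "S \<subseteq> mcont"
    using compactin_subset_topspace[OF assms] by (simp add: topspace_tau_uc)
  obtain T where T: "finite T" "T \<subseteq> S" "\<forall>g\<in>S. \<exists>t\<in>T. g \<in> uc_ball t Z"
    by (rule compactin_tau_uc_net[OF assms, where W = "\<lambda>_. Z"]) (use Z(1) in simp)
  obtain X where X: "finite X"
    "\<forall>s\<in>T. \<forall>t\<in>T. (\<forall>x\<in>X. hausdorff_close W (s x) (t x)) \<longrightarrow> (\<forall>x. hausdorff_close W (s x) (t x))"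
    by (rule finite_separating_points[OF T(1)])
  define P where "P = (\<lambda>x. (x, Z)) ` X"
  have "finite P"
    unfolding P_def using X(1) by (rule finite_imageI)
  moreover have "\<forall>(x, W')\<in>P. entourage W'"
    unfolding P_def using Z(1) by auto
  moreover have "{(f, g). f \<in> S \<and> g \<in> S \<and> (\<forall>(x, W')\<in>P. (f, g) \<in> pdagger x W')} \<subseteq> udagger V"
  proof
    fix q assume "q \<in> {(f, g). f \<in> S \<and> g \<in> S \<and> (\<forall>(x, W')\<in>P. (f, g) \<in> pdagger x W')}"
    then obtain f g where q: "q = (f, g)"
      and fg: "f \<in> S" "g \<in> S" "\<forall>(x, W')\<in>P. (f, g) \<in> pdagger x W'"
      by blast
    obtain s t where st: "s \<in> T" "f \<in> uc_ball s Z" "t \<in> T" "g \<in> uc_ball t Z"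
      using T(3) fg(1,2) by meson
    have "\<forall>x. hausdorff_close Z (s x) (f x)" "\<forall>x. hausdorff_close Z (t x) (g x)"
      using st(2,4) unfolding uc_ball_def by blast+
    then have s: "hausdorff_close Z (f x) (s x)" and t: "hausdorff_close Z (g x) (t x)" for x
      using hausdorff_close_sym[OF Z(1)] by blast+
    have "hausdorff_close W (s x) (t x)" if "x \<in> X" for x
    proof -
      have "(f, g) \<in> pdagger x Z"
        using fg(3) that unfolding P_def by force
      then have "hausdorff_close Z (f x) (g x)"
        using pdagger_iff_hausdorff_close[of f g] fg(1,2) S by blast
      then have "hausdorff_close (Z O Z O Z) (s x) (t x)"
        by (rule hausdorff_close_trans3[OF hausdorff_close_sym[OF Z(1) s] _ t])
      then show ?thesis
        by (rule hausdorff_close_mono[OF Z(2)])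
    qed
    then have "hausdorff_close W (s x) (t x)" for x
      using X(2) st(1,3) by blast
    then have "hausdorff_close (Z O W O Z) (f x) (g x)" for x
      by (rule hausdorff_close_trans3[OF s _ hausdorff_close_sym[OF Z(1) t]])
    moreover have "Z O W O Z \<subseteq> V"
      by (rule order_trans[OF relcomp_mono[OF \<open>Z \<subseteq> W\<close> relcomp_mono[OF order_refl \<open>Z \<subseteq> W\<close>]] W(2)])
    ultimately have "\<forall>x. hausdorff_close V (f x) (g x)"
      using hausdorff_close_mono[of "Z O W O Z" V] by blast
    then show "q \<in> udagger V"
      unfolding q using udagger_iff_hausdorff_close fg(1,2) S by blast
  qed
  ultimately show "\<exists>P. finite P \<and> (\<forall>(x, W)\<in>P. entourage W) \<and>
      {(f, g). f \<in> S \<and> g \<in> S \<and> (\<forall>(x, W)\<in>P. (f, g) \<in> pdagger x W)} \<subseteq> udagger V"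
    by blast
qed

section \<open>Sufficiency\<close>

text \<open>The Kuratowski lower limit of the values g x along U.\<close>

definition lower_limit :: "('a \<Rightarrow> 'b set) filter \<Rightarrow> 'a \<Rightarrow> 'b::uniform_space set" where
  "lower_limit U x = {y. \<forall>W. entourage W \<longrightarrow> eventually (\<lambda>g. g x \<inter> W `` {y} \<noteq> {}) U}"

lemma closed_lower_limit:
  fixes U :: "('a \<Rightarrow> 'b::uniform_space set) filter"
  shows "closed (lower_limit U x)"
  unfolding closure_subset_eq[symmetric]
proof
  fix y assume y: "y \<in> closure (lower_limit U x)"
  show "y \<in> lower_limit U x"
    unfolding lower_limit_def
  proof (intro CollectI allI impI)
    fix W :: "('b \<times> 'b) set" assume "entourage W"
    then obtain W' where W': "entourage W'" "W' O W' \<subseteq> W"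
      by (rule entourage_half)
    then obtain y' where y': "(y, y') \<in> W'" "y' \<in> lower_limit U x"
      using y unfolding closure_iff_entourage by blast
    then have "eventually (\<lambda>g. g x \<inter> W' `` {y'} \<noteq> {}) U"
      using W'(1) unfolding lower_limit_def by blast
    then show "eventually (\<lambda>g. g x \<inter> W `` {y} \<noteq> {}) U"
      by (rule eventually_mono) (use y'(1) W'(2) in \<open>auto simp: disjoint_iff\<close>)
  qed
qed

lemma ultrafilter_compact_cluster:
  fixes A :: "'c \<Rightarrow> 'b::uniform_space set"
  assumes U: "ultrafilter U" and K: "compact K" and meets: "eventually (\<lambda>g. A g \<inter> K \<noteq> {}) U"
  shows "\<exists>y\<in>K. \<forall>W. entourage W \<longrightarrow> eventually (\<lambda>g. A g \<inter> W `` {y} \<noteq> {}) U"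
proof (rule ccontr)
  assume no_cluster: "\<not> ?thesis"
  have "\<exists>W. entourage W \<and> eventually (\<lambda>g. A g \<inter> W `` {y} = {}) U" if y: "y \<in> K" for y
  proof -
    obtain W where W: "entourage W" "\<not> eventually (\<lambda>g. A g \<inter> W `` {y} \<noteq> {}) U"
      using no_cluster y by blast
    then have "eventually (\<lambda>g. \<not> A g \<inter> W `` {y} \<noteq> {}) U"
      by (intro ultrafilter_eventually_neg[OF U])
    with W(1) show ?thesis by auto
  qed
  then obtain Wy where Wy: "\<And>y. y \<in> K \<Longrightarrow> entourage (Wy y) \<and> eventually (\<lambda>g. A g \<inter> Wy y `` {y} = {}) U"
    by metis
  have "K \<subseteq> (\<Union>y\<in>K. interior (Wy y `` {y}))"
    using Wy entourage_Image_interior by blast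
  then obtain Y where Y: "Y \<subseteq> K" "finite Y" "K \<subseteq> (\<Union>y\<in>Y. interior (Wy y `` {y}))"
    by (rule compactE_image[OF K open_interior])
  have "eventually (\<lambda>g. \<forall>y\<in>Y. A g \<inter> Wy y `` {y} = {}) U"
    by (intro eventually_ball_finite Y(2)) (use Y(1) Wy in blast)
  then obtain g where g: "\<forall>y\<in>Y. A g \<inter> Wy y `` {y} = {}" "A g \<inter> K \<noteq> {}"
    using ultrafilter_eventually_ex[OF U eventually_conj[OF _ meets]] by blast
  then obtain z y where "z \<in> A g" "y \<in> Y" "z \<in> interior (Wy y `` {y})"
    using Y(3) unfolding disjoint_iff by blast
  then show False
    using g(1) interior_subset[of "Wy y `` {y}"] unfolding disjoint_iff by blast
qed

context
  fixes F :: "('a::topological_space \<Rightarrow> 'b::uniform_space set) set"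
    and U :: "('a \<Rightarrow> 'b set) filter"
  assumes relcompact: "pointwise_relcompact F"
    and ultra: "ultrafilter U"
    and in_closure: "eventually (\<lambda>g. g \<in> tau_uc closure_of F) U"
begin

lemma lower_limit_subset: "lower_limit U x \<subseteq> closure (\<Union>f\<in>F. f x)"
proof
  fix y assume y: "y \<in> lower_limit U x"
  have "W `` {y} \<inter> closure (\<Union>f\<in>F. f x) \<noteq> {}" if "entourage W" for W
  proof -
    have "eventually (\<lambda>g. g x \<inter> W `` {y} \<noteq> {}) U"
      using y that unfolding lower_limit_def by blast
    then have "eventually (\<lambda>g. g x \<inter> W `` {y} \<noteq> {} \<and> g \<in> tau_uc closure_of F) U"
      using in_closure by (rule eventually_conj)
    then obtain g where "g x \<inter> W `` {y} \<noteq> {}" "g \<in> tau_uc closure_of F"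
      using ultrafilter_eventually_ex[OF ultra] by blast
    then show ?thesis
      using tau_uc_closure_values_subset unfolding disjoint_iff by blast
  qed
  then show "y \<in> closure (\<Union>f\<in>F. f x)"
    using closure_iff_entourage[of y "closure (\<Union>f\<in>F. f x)"] by simp
qed

lemma compact_lower_limit: "compact (lower_limit U x)"
proof -
  have "compact (closure (\<Union>f\<in>F. f x) \<inter> lower_limit U x)"
    using relcompact unfolding pointwise_relcompact_def
    by (intro compact_Int_closed closed_lower_limit) blast
  then show ?thesis
    using lower_limit_subset by (simp add: Int_absorb1)
qed

lemma eventually_values_subset_lower_limit:
  assumes W: "entourage W"
  shows "eventually (\<lambda>g. g x \<subseteq> W `` lower_limit U x) U"
proof (rule ccontr)
  define A where "A g = g x - W `` lower_limit U x" for g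
  assume "\<not> eventually (\<lambda>g. g x \<subseteq> W `` lower_limit U x) U"
  then have "eventually (\<lambda>g. \<not> g x \<subseteq> W `` lower_limit U x) U"
    by (rule ultrafilter_eventually_neg[OF ultra])
  then have meets: "eventually (\<lambda>g. A g \<inter> closure (\<Union>f\<in>F. f x) \<noteq> {}) U"
    using in_closure
    by (rule eventually_elim2)
      (use tau_uc_closure_values_subset[where F = F and x = x] in \<open>auto simp: A_def disjoint_iff\<close>)
  have "compact (closure (\<Union>f\<in>F. f x))"
    using relcompact unfolding pointwise_relcompact_def by blast
  then obtain y where "y \<in> closure (\<Union>f\<in>F. f x)"
    and near: "\<forall>W'. entourage W' \<longrightarrow> eventually (\<lambda>g. A g \<inter> W' `` {y} \<noteq> {}) U"
    using ultrafilter_compact_cluster[OF ultra _ meets] by blast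
  \<comment> \<open>a cluster point of the points of g x that are W-far from the lower limit lies in the lower limit\<close>
  have "y \<in> lower_limit U x"
    unfolding lower_limit_def
  proof (intro CollectI allI impI)
    fix W' :: "('b \<times> 'b) set" assume "entourage W'"
    show "eventually (\<lambda>g. g x \<inter> W' `` {y} \<noteq> {}) U"
      using near[rule_format, OF \<open>entourage W'\<close>] by (rule eventually_mono) (auto simp: A_def)
  qed
  moreover obtain g z where "z \<in> A g" "(y, z) \<in> W"
    using ultrafilter_eventually_ex[OF ultra near[rule_format, OF W]] by blast
  ultimately show False
    unfolding A_def by blast
qed

lemma eventually_lower_limit_subset_values:
  assumes "entourage W"
  shows "eventually (\<lambda>g. lower_limit U x \<subseteq> W `` g x) U"
proof -
  obtain W' where W': "entourage W'" "W' O W' \<subseteq> W"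
    using entourage_half[OF assms] .
  obtain Y where Y: "finite Y" "Y \<subseteq> lower_limit U x" "lower_limit U x \<subseteq> W' `` Y"
    using compact_entourage_net[OF compact_lower_limit W'(1)] .
  have "eventually (\<lambda>g. \<forall>y\<in>Y. g x \<inter> W' `` {y} \<noteq> {}) U"
    by (intro eventually_ball_finite Y(1)) (use Y(2) W'(1) in \<open>auto simp: lower_limit_def\<close>)
  then show ?thesis
  proof (rule eventually_mono)
    fix g assume g: "\<forall>y\<in>Y. g x \<inter> W' `` {y} \<noteq> {}"
    show "lower_limit U x \<subseteq> W `` g x"
    proof
      fix z assume "z \<in> lower_limit U x"
      then obtain y where y: "y \<in> Y" "(y, z) \<in> W'"
        using Y(3) by blast
      then obtain c where "c \<in> g x" "(y, c) \<in> W'"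
        using g unfolding disjoint_iff by blast
      moreover have "(c, z) \<in> W' O W'"
        using entourage_sym[OF W'(1) \<open>(y, c) \<in> W'\<close>] y(2) by blast
      ultimately show "z \<in> W `` g x"
        using W'(2) by blast
    qed
  qed
qed

lemma eventually_hausdorff_close_lower_limit:
  assumes "entourage W"
  shows "eventually (\<lambda>g. hausdorff_close W (lower_limit U x) (g x)) U"
  unfolding hausdorff_close_iff_Image[OF assms]
  by (rule eventually_conj[OF eventually_lower_limit_subset_values[OF assms]
        eventually_values_subset_lower_limit[OF assms]])

lemma lower_limit_nonempty: "lower_limit U x \<noteq> {}"
proof -
  obtain g where "g x \<subseteq> UNIV `` lower_limit U x" "g \<in> tau_uc closure_of F"
    using ultrafilter_eventually_ex[OF ultra eventually_conj[OF
          eventually_values_subset_lower_limit[OF entourage_UNIV] in_closure]]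
    by blast
  moreover have "g x \<noteq> {}"
    using calculation(2) tau_uc_closure_subset_mcont mcont_nonempty by blast
  ultimately show ?thesis
    by auto
qed

lemma eventually_uniformly_Cauchy:
  assumes "F \<subseteq> mcont" "finite_extension F" "entourage V"
  obtains E where "eventually E U" "\<And>g g' x. E g \<Longrightarrow> E g' \<Longrightarrow> hausdorff_close V (g x) (g' x)"
proof -
  obtain W where W: "entourage W" "W O W O W \<subseteq> V"
    using entourage_cube_root[OF assms(3)] .
  obtain P where P: "finite P" "\<forall>(x, W')\<in>P. entourage W'"
    and extends: "{(f, f'). f \<in> F \<and> f' \<in> F \<and> (\<forall>(x, W')\<in>P. (f, f') \<in> pdagger x W')} \<subseteq> udagger W"
    by (rule finite_extensionE[OF assms(2) W(1)])
  have "entourage (W \<inter> \<Inter>(snd ` P))"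
    using P by (intro entourage_Int W(1) entourage_Inter) auto
  then obtain Z where Z: "entourage Z" "Z O Z O Z O Z \<subseteq> W \<inter> \<Inter>(snd ` P)"
    by (rule entourage_fourth_root)
  have "Z \<subseteq> W"
  proof -
    have "Z O Z O Z O Z \<subseteq> W"
      using Z(2) unfolding Int_subset_iff by (rule conjunct1)
    then show ?thesis
      by (rule entourage_relcomp_subsetD[OF Z(1) entourage_relcomp_subsetD[OF Z(1)
            entourage_relcomp_subsetD[OF Z(1)]]])
  qed
  \<comment> \<open>closeness to the lower limit is only needed at the points supplied by the finite extension property\<close>
  define E where "E g \<longleftrightarrow> g \<in> tau_uc closure_of F \<and>
      (\<forall>x\<in>fst ` P. hausdorff_close Z (lower_limit U x) (g x))" for g
  have "eventually (\<lambda>g. \<forall>x\<in>fst ` P. hausdorff_close Z (lower_limit U x) (g x)) U"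
    using P(1) eventually_hausdorff_close_lower_limit[OF Z(1)] by (intro eventually_ball_finite) auto
  then have "eventually E U"
    unfolding E_def using in_closure by (rule eventually_conj[rotated])
  moreover have "hausdorff_close V (g y) (g' y)" if E: "E g" "E g'" for g g' y
  proof -
    obtain f f' where f: "f \<in> F" "f \<in> uc_ball g Z" and f': "f' \<in> F" "f' \<in> uc_ball g' Z"
      using E Z(1) unfolding E_def in_closure_of_tau_uc by blast
    have "hausdorff_close W' (f x) (f' x)" if "(x, W') \<in> P" for x W'
    proof -
      have "x \<in> fst ` P"
        using that by force
      then have lg: "hausdorff_close Z (lower_limit U x) (g x)"
        and lg': "hausdorff_close Z (lower_limit U x) (g' x)"
        using \<open>E g\<close> \<open>E g'\<close> unfolding E_def by blast+
      have gf: "hausdorff_close Z (g x) (f x)" and g'f': "hausdorff_close Z (g' x) (f' x)"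
        using f(2) f'(2) unfolding uc_ball_def by blast+
      have "hausdorff_close (Z O Z O Z O Z) (f x) (f' x)"
        using hausdorff_close_trans[OF hausdorff_close_sym[OF Z(1) gf]
            hausdorff_close_trans3[OF hausdorff_close_sym[OF Z(1) lg] lg' g'f']] .
      moreover have "W \<inter> \<Inter>(snd ` P) \<subseteq> W'"
        using that by force
      then have "Z O Z O Z O Z \<subseteq> W'"
        by (rule order_trans[OF Z(2)])
      ultimately show ?thesis
        by (rule hausdorff_close_mono[rotated])
    qed
    then have ff': "hausdorff_close W (f y) (f' y)"
      by (rule finite_extension_hausdorff_close[OF assms(1) extends f(1) f'(1)])
    have gf: "hausdorff_close Z (g y) (f y)" and g'f': "hausdorff_close Z (g' y) (f' y)"
      using f(2) f'(2) unfolding uc_ball_def by blast+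
    have "hausdorff_close (Z O W O Z) (g y) (g' y)"
      using hausdorff_close_trans3[OF gf ff' hausdorff_close_sym[OF Z(1) g'f']] .
    moreover have "Z O W O Z \<subseteq> V"
      by (rule order_trans[OF relcomp_mono[OF \<open>Z \<subseteq> W\<close> relcomp_mono[OF order_refl \<open>Z \<subseteq> W\<close>]] W(2)])
    ultimately show ?thesis
      by (rule hausdorff_close_mono[rotated])
  qed
  ultimately show thesis
    by (rule that)
qed

lemma eventually_uniformly_close_lower_limit:
  assumes "F \<subseteq> mcont" "finite_extension F" "entourage V"
  shows "eventually (\<lambda>g. \<forall>x. hausdorff_close V (lower_limit U x) (g x)) U"
proof -
  obtain W where W: "entourage W" "W O W \<subseteq> V"
    using entourage_half[OF assms(3)] .
  obtain E where E: "eventually E U" "\<And>g g' x. E g \<Longrightarrow> E g' \<Longrightarrow> hausdorff_close W (g x) (g' x)"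
    using eventually_uniformly_Cauchy[OF assms(1,2) W(1)] by blast
  show ?thesis
    using E(1)
  proof (rule eventually_mono)
    fix g assume "E g"
    show "\<forall>x. hausdorff_close V (lower_limit U x) (g x)"
    proof
      fix x
      obtain g' where g': "E g'" "hausdorff_close W (lower_limit U x) (g' x)"
        using ultrafilter_eventually_ex[OF ultra eventually_conj[OF E(1)
              eventually_hausdorff_close_lower_limit[OF W(1)]]]
        by blast
      have "hausdorff_close (W O W) (lower_limit U x) (g x)"
        by (rule hausdorff_close_trans[OF g'(2) E(2)[OF g'(1) \<open>E g\<close>]])
      then show "hausdorff_close V (lower_limit U x) (g x)"
        by (rule hausdorff_close_mono[OF W(2)])
    qed
  qed
qed

lemma lower_limit_in_tau_uc_closure:
  assumes "F \<subseteq> mcont" "finite_extension F"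
  shows "lower_limit U \<in> tau_uc closure_of F"
proof -
  have approx: "\<exists>g\<in>tau_uc closure_of F. \<forall>x. hausdorff_close V (lower_limit U x) (g x)"
    if "entourage V" for V
    using ultrafilter_eventually_ex[OF ultra eventually_conj[OF in_closure
          eventually_uniformly_close_lower_limit[OF assms that]]]
    by blast
  have "lower_limit U \<in> mcont"
  proof (rule mcont_if_uniform_approx[OF lower_limit_nonempty compact_lower_limit])
    fix V :: "('b \<times> 'b) set" assume "entourage V"
    then obtain g where g: "g \<in> tau_uc closure_of F" "\<forall>x. hausdorff_close V (lower_limit U x) (g x)"
      using approx by blast
    have "\<forall>x. hausdorff_close V (g x) (lower_limit U x)"
      using hausdorff_close_sym[OF \<open>entourage V\<close> g(2)[rule_format]] by blast
    then show "\<exists>g\<in>mcont. \<forall>x. hausdorff_close V (g x) (lower_limit U x)"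
      using g(1) tau_uc_closure_subset_mcont by blast
  qed
  moreover have "\<exists>f\<in>F. f \<in> uc_ball (lower_limit U) V" if V: "entourage V" for V
  proof -
    obtain W where W: "entourage W" "W O W \<subseteq> V"
      using entourage_half[OF V] .
    obtain g where g: "g \<in> tau_uc closure_of F" "\<forall>x. hausdorff_close W (lower_limit U x) (g x)"
      using approx[OF W(1)] by blast
    then obtain f where f: "f \<in> F" "f \<in> uc_ball g W"
      using W(1) unfolding in_closure_of_tau_uc by blast
    then have "f \<in> mcont" "\<forall>x. hausdorff_close W (g x) (f x)"
      unfolding uc_ball_def by blast+
    then have "f \<in> uc_ball (lower_limit U) (W O W)"
      using hausdorff_close_trans[OF g(2)[rule_format]] unfolding uc_ball_def by blast
    then show ?thesis
      using uc_ball_mono[OF W(2)] f(1) by blast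
  qed
  ultimately show ?thesis
    unfolding in_closure_of_tau_uc by blast
qed

lemma eventually_in_uc_ball_lower_limit:
  assumes "F \<subseteq> mcont" "finite_extension F" "entourage V"
  shows "eventually (\<lambda>g. g \<in> uc_ball (lower_limit U) V) U"
  using in_closure eventually_uniformly_close_lower_limit[OF assms]
  by (rule eventually_elim2) (auto simp: uc_ball_def in_closure_of_tau_uc)

end

lemma compactin_tau_uc_closure:
  assumes "F \<subseteq> mcont" "pointwise_relcompact F" "finite_extension F"
  shows "compactin tau_uc (tau_uc closure_of F)"
proof (rule compactin_if_ultrafilters_converge)
  show "tau_uc closure_of F \<subseteq> topspace tau_uc"
    by (rule closure_of_subset_topspace)
next
  fix U assume U: "ultrafilter U" "eventually (\<lambda>g. g \<in> tau_uc closure_of F) U"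
  show "\<exists>l\<in>tau_uc closure_of F. \<forall>N. openin tau_uc N \<longrightarrow> l \<in> N \<longrightarrow> eventually (\<lambda>g. g \<in> N) U"
  proof (intro bexI allI impI)
    show "lower_limit U \<in> tau_uc closure_of F"
      using lower_limit_in_tau_uc_closure[OF assms(2) U assms(1,3)] .
    fix N assume "openin tau_uc N" "lower_limit U \<in> N"
    then obtain V where V: "entourage V" "uc_ball (lower_limit U) V \<subseteq> N"
      unfolding openin_tau_uc by metis
    show "eventually (\<lambda>g. g \<in> N) U"
      by (rule eventually_mono[OF eventually_in_uc_ball_lower_limit[OF assms(2) U assms(1,3) V(1)]])
        (use V(2) in blast)
  qed
qed

theorem theorem3p2:
  fixes F :: "('a::topological_space \<Rightarrow> 'b::{uniform_space, t2_space} set) set"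
  assumes "locally_compact_space (euclidean :: 'a topology)"
    and "F \<subseteq> mcont"
  shows "compactin tau_uc (tau_uc closure_of F) \<longleftrightarrow>
    ((pointwise_relcompact F \<and> equicontinuous F) \<and> finite_extension F)"
proof
  assume compact: "compactin tau_uc (tau_uc closure_of F)"
  have "F \<subseteq> tau_uc closure_of F"
    using assms(2) by (rule subset_tau_uc_closure)
  then show "(pointwise_relcompact F \<and> equicontinuous F) \<and> finite_extension F"
    using pointwise_relcompact_subset[OF _ pointwise_relcompact_if_compactin[OF compact]]
      equicontinuous_subset[OF _ equicontinuous_if_compactin[OF compact]]
      finite_extension_subset[OF _ finite_extension_if_compactin[OF compact]]
    by blast
next
  assume "(pointwise_relcompact F \<and> equicontinuous F) \<and> finite_extension F"
  then show "compactin tau_uc (tau_uc closure_of F)"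
    using compactin_tau_uc_closure assms(2) by blast
qed

end
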